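(* Let $p$ be a prime, $\mu\ge1$, $m=p^\mu$, and $n>2$. Let $A=(a_{ij})$ be a random symmetric $n\times n$ matrix over $\mathbf{Z}_m$, conditioned on $a_{11}\equiv0\pmod p$ and $a_{12}\not\equiv0\pmod p$. Then there is an $n\times n$ matrix $V$ (depending on $A$) such that $$VAV^T\equiv\begin{pmatrix} a_{11} & a_{12} & 0\\ a_{21} & a_{22} & 0\\ 0 & 0 & A''\end{pmatrix}\pmod{p^\mu},$$ where the off-diagonal blocks are zero and $A''$ is a random symmetric $(n-2)\times(n-2)$ matrix over $\mathbf{Z}_m$ (i.e. under the stated conditional distribution of $A$, $A''$ reduced mod $m$ is uniformly distributed over symmetric $(n-2)\times(n-2)$ matrices over $\mathbf{Z}_m$).
   Context: For a positive integer $m$, $\mathbf{Z}_m=\{1,2,\ldots,m\}$ (viewed as residues mod $m$). A random symmetric $n\times n$ matrix over $\mathbf{Z}_m$ is one whose entries $a_{ij}$, $i\le j$, are chosen independently and uniformly from $\mathbf{Z}_m$, with $a_{ji}=a_{ij}$. *)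

theory Defs
  imports "HOL-Probability.Probability_Mass_Function" "HOL-Computational_Algebra.Primes"
begin

(* An n x n matrix is a function nat => nat => int with indices 0..n-1,
   and value 0 outside the index range. *)

definition sym_mats :: "nat \<Rightarrow> int \<Rightarrow> (nat \<Rightarrow> nat \<Rightarrow> int) set" where
  "sym_mats n m = {A. (\<forall>i j. (i < n \<and> j < n \<longrightarrow> A i j \<in> {0..<m})
                          \<and> (\<not>(i < n \<and> j < n) \<longrightarrow> A i j = 0))
                     \<and> (\<forall>i j. A i j = A j i)}"

definition mat_mul :: "nat \<Rightarrow> (nat \<Rightarrow> nat \<Rightarrow> int) \<Rightarrow> (nat \<Rightarrow> nat \<Rightarrow> int) \<Rightarrow> (nat \<Rightarrow> nat \<Rightarrow> int)" where
  "mat_mul n A B = (\<lambda>i j. if i < n \<and> j < n then (\<Sum>k<n. A i k * B k j) else 0)"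

definition mat_transp :: "(nat \<Rightarrow> nat \<Rightarrow> int) \<Rightarrow> (nat \<Rightarrow> nat \<Rightarrow> int)" where
  "mat_transp A = (\<lambda>i j. A j i)"

definition congr_mat :: "nat \<Rightarrow> (nat \<Rightarrow> nat \<Rightarrow> int) \<Rightarrow> (nat \<Rightarrow> nat \<Rightarrow> int) \<Rightarrow> (nat \<Rightarrow> nat \<Rightarrow> int)" where
  "congr_mat n V A = mat_mul n (mat_mul n V A) (mat_transp V)"

definition block_form :: "nat \<Rightarrow> int \<Rightarrow> (nat \<Rightarrow> nat \<Rightarrow> int) \<Rightarrow> (nat \<Rightarrow> nat \<Rightarrow> int) \<Rightarrow> bool" where
  "block_form n m A B \<longleftrightarrow>
     (\<forall>i<2. \<forall>j<2. B i j mod m = A i j mod m) \<and>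
     (\<forall>i<2. \<forall>j. 2 \<le> j \<and> j < n \<longrightarrow> B i j mod m = 0 \<and> B j i mod m = 0)"

definition lower_block :: "nat \<Rightarrow> int \<Rightarrow> (nat \<Rightarrow> nat \<Rightarrow> int) \<Rightarrow> (nat \<Rightarrow> nat \<Rightarrow> int)" where
  "lower_block n m B = (\<lambda>i j. if i < n - 2 \<and> j < n - 2 then B (i+2) (j+2) mod m else 0)"

end

theory Submission
  imports Defs "HOL-Number_Theory.Modular_Inverse"
begin

text \<open>
  Write \<open>A = [[D, C\<^sup>T], [C, E]]\<close> with \<open>D\<close> the upper left \<open>2 \<times> 2\<close> block. Since
  \<open>a\<^sub>1\<^sub>1 \<equiv> 0\<close> and \<open>a\<^sub>1\<^sub>2 \<not>\<equiv> 0 (mod p)\<close>, \<open>det D \<equiv> -a\<^sub>1\<^sub>2\<^sup>2\<close> is a unit modulo \<open>p\<^sup>\<mu>\<close>, so the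
  block elimination \<open>V = [[I, 0], [-C D\<^sup>-\<^sup>1, I]]\<close> exists and turns \<open>A\<close> into
  \<open>diag(D, E - C D\<^sup>-\<^sup>1 C\<^sup>T)\<close>. The correction \<open>C D\<^sup>-\<^sup>1 C\<^sup>T\<close> only depends on the first two
  rows and columns of \<open>A\<close>, which also decide membership in the conditioning set. Hence
  \<open>A \<mapsto> (border of A, Schur complement mod m)\<close> is a bijection from the conditioning set onto
  (its borders) \<open>\<times>\<close> (symmetric \<open>(n-2)\<times>(n-2)\<close> matrices over \<open>\<int>\<^sub>m\<close>), and the uniform distribution
  pushes forward to the uniform distribution on the second factor.
\<close>

lemma pmf_of_set_Times:
  assumes "finite R" "R \<noteq> {}" "finite T" "T \<noteq> {}"
  shows "pmf_of_set (R \<times> T) = pair_pmf (pmf_of_set R) (pmf_of_set T)"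
proof (rule pmf_eqI)
  fix x :: "'a \<times> 'b"
  show "pmf (pmf_of_set (R \<times> T)) x = pmf (pair_pmf (pmf_of_set R) (pmf_of_set T)) x"
    using assms by (cases x) (simp add: pmf_pair card_cartesian_product split: split_indicator)
qed

lemma map_pmf_of_set_bij_betw_snd:
  assumes bij: "bij_betw g S (R \<times> T)" and "finite S" "S \<noteq> {}"
  shows "map_pmf (snd \<circ> g) (pmf_of_set S) = pmf_of_set T"
proof -
  have "R \<times> T = g ` S" using bij by (simp add: bij_betw_def)
  hence "finite (R \<times> T)" "R \<times> T \<noteq> {}" using assms(2,3) by auto
  hence fin: "finite R" "R \<noteq> {}" "finite T" "T \<noteq> {}"
    by (auto dest: finite_cartesian_productD1 finite_cartesian_productD2)
  have "map_pmf (snd \<circ> g) (pmf_of_set S) = map_pmf snd (map_pmf g (pmf_of_set S))"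
    by (simp add: pmf.map_comp)
  also have "\<dots> = map_pmf snd (pmf_of_set (R \<times> T))"
    using map_pmf_of_set_bij_betw[OF bij assms(3,2)] by simp
  also have "\<dots> = pmf_of_set T"
    by (simp add: pmf_of_set_Times[OF fin] map_snd_pair_pmf)
  finally show ?thesis .
qed

lemma sym_mats_sym: "A \<in> sym_mats n m \<Longrightarrow> A i j = A j i"
  by (simp add: sym_mats_def)

lemma sym_mats_range: "A \<in> sym_mats n m \<Longrightarrow> i < n \<Longrightarrow> j < n \<Longrightarrow> 0 \<le> A i j \<and> A i j < m"
  by (simp add: sym_mats_def)

lemma sym_mats_outside: "A \<in> sym_mats n m \<Longrightarrow> \<not> (i < n \<and> j < n) \<Longrightarrow> A i j = 0"
  by (simp add: sym_mats_def)

lemma finite_sym_mats: "finite (sym_mats n m)"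
proof -
  let ?I = "{..<n} \<times> {..<n}"
  let ?h = "\<lambda>f i j. if i < n \<and> j < n then f (i, j) else (0::int)"
  have "sym_mats n m \<subseteq> ?h ` (PiE ?I (\<lambda>_. {0..<m}))"
  proof
    fix A assume A: "A \<in> sym_mats n m"
    let ?f = "restrict (\<lambda>(i, j). A i j) ?I"
    have "?f \<in> PiE ?I (\<lambda>_. {0..<m})" "A = ?h ?f"
      using A by (auto simp: sym_mats_def fun_eq_iff)
    thus "A \<in> ?h ` (PiE ?I (\<lambda>_. {0..<m}))" by blast
  qed
  thus ?thesis by (rule finite_subset) (intro finite_imageI finite_PiE, auto)
qed

definition elim_mat :: "(nat \<Rightarrow> int) \<Rightarrow> (nat \<Rightarrow> int) \<Rightarrow> nat \<Rightarrow> nat \<Rightarrow> int" where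
  "elim_mat X Y i k =
     (if k = i then 1 else 0) - X i * (if k = 0 then 1 else 0) - Y i * (if k = 1 then 1 else 0)"

definition row_elim :: "(nat \<Rightarrow> int) \<Rightarrow> (nat \<Rightarrow> int) \<Rightarrow> (nat \<Rightarrow> nat \<Rightarrow> int) \<Rightarrow> nat \<Rightarrow> nat \<Rightarrow> int" where
  "row_elim X Y A i l = A i l - X i * A 0 l - Y i * A 1 l"

lemma sum_delta_mult_left: "i < (n::nat) \<Longrightarrow> (\<Sum>k<n. (if k = i then 1 else 0) * f k) = (f i :: int)"
  by (simp add: if_distrib[where f="\<lambda>x. x * _"] cong: if_cong)

lemma sum_delta_mult_right: "i < (n::nat) \<Longrightarrow> (\<Sum>k<n. f k * (if k = i then 1 else 0)) = (f i :: int)"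
  by (simp add: if_distrib[where f="\<lambda>x. _ * x"] cong: if_cong)

lemma mat_mul_elim_mat:
  assumes "1 < n" "i < n" "l < n"
  shows "mat_mul n (elim_mat X Y) A i l = row_elim X Y A i l"
proof -
  have "mat_mul n (elim_mat X Y) A i l =
          (\<Sum>k<n. (if k = i then 1 else 0) * A k l)
        - X i * (\<Sum>k<n. (if k = 0 then 1 else 0) * A k l)
        - Y i * (\<Sum>k<n. (if k = 1 then 1 else 0) * A k l)"
    using assms unfolding mat_mul_def elim_mat_def
    by (simp add: left_diff_distrib sum_subtractf sum_distrib_left mult.assoc)
  also have "\<dots> = row_elim X Y A i l"
    using assms by (simp only: sum_delta_mult_left) (simp add: row_elim_def)
  finally show ?thesis .
qed

lemma congr_mat_elim_mat:
  assumes "1 < n" "i < n" "j < n"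
  shows "congr_mat n (elim_mat X Y) A i j =
           row_elim X Y A i j - X j * row_elim X Y A i 0 - Y j * row_elim X Y A i 1"
proof -
  let ?VA = "mat_mul n (elim_mat X Y) A"
  have "congr_mat n (elim_mat X Y) A i j =
          (\<Sum>l<n. ?VA i l * (if l = j then 1 else 0))
        - X j * (\<Sum>l<n. ?VA i l * (if l = 0 then 1 else 0))
        - Y j * (\<Sum>l<n. ?VA i l * (if l = 1 then 1 else 0))"
    using assms unfolding congr_mat_def mat_mul_def[of n ?VA] mat_transp_def elim_mat_def
    by (simp add: right_diff_distrib sum_subtractf sum_distrib_left mult.assoc mult.left_commute)
  also have "\<dots> = row_elim X Y A i j - X j * row_elim X Y A i 0 - Y j * row_elim X Y A i 1"
    using assms by (simp only: sum_delta_mult_right) (simp add: mat_mul_elim_mat)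
  finally show ?thesis .
qed

section \<open>The Schur complement of the upper left \<open>2 \<times> 2\<close> block\<close>

definition det2 :: "(nat \<Rightarrow> nat \<Rightarrow> int) \<Rightarrow> int" where
  "det2 A = A 0 0 * A 1 1 - A 0 1 * A 0 1"

text \<open>\<open>(schur_X m A i, schur_Y m A i)\<close> is row \<open>i \<ge> 2\<close> of \<open>C D\<^sup>-\<^sup>1\<close>, using \<open>D\<^sup>-\<^sup>1 = (det2 A)\<^sup>-\<^sup>1 [[A 1 1, - A 0 1], [- A 0 1, A 0 0]]\<close> modulo \<open>m\<close>.\<close>

definition schur_X :: "int \<Rightarrow> (nat \<Rightarrow> nat \<Rightarrow> int) \<Rightarrow> nat \<Rightarrow> int" where
  "schur_X m A i =
     (if 2 \<le> i then modular_inverse m (det2 A) * (A i 0 * A 1 1 - A i 1 * A 0 1) else 0)"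

definition schur_Y :: "int \<Rightarrow> (nat \<Rightarrow> nat \<Rightarrow> int) \<Rightarrow> nat \<Rightarrow> int" where
  "schur_Y m A i =
     (if 2 \<le> i then modular_inverse m (det2 A) * (A i 1 * A 0 0 - A i 0 * A 0 1) else 0)"

definition schur_elim :: "int \<Rightarrow> (nat \<Rightarrow> nat \<Rightarrow> int) \<Rightarrow> nat \<Rightarrow> nat \<Rightarrow> int" where
  "schur_elim m A = elim_mat (schur_X m A) (schur_Y m A)"

definition schur_shift :: "int \<Rightarrow> (nat \<Rightarrow> nat \<Rightarrow> int) \<Rightarrow> nat \<Rightarrow> nat \<Rightarrow> int" where
  "schur_shift m A i j = schur_X m A i * A 0 j + schur_Y m A i * A 1 j"

definition schur_complement :: "nat \<Rightarrow> int \<Rightarrow> (nat \<Rightarrow> nat \<Rightarrow> int) \<Rightarrow> nat \<Rightarrow> nat \<Rightarrow> int" where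
  "schur_complement n m A = (\<lambda>i j. if i < n - 2 \<and> j < n - 2
     then (A (i+2) (j+2) - schur_shift m A (i+2) (j+2)) mod m else 0)"

lemma coprime_det2:
  fixes q a b d :: int
  assumes "prime q" "q dvd a" "\<not> q dvd b"
  shows "coprime (a * d - b * b) (q ^ k)"
proof -
  have "\<not> q dvd a * d - b * b"
  proof
    assume "q dvd a * d - b * b"
    hence "q dvd a * d - (a * d - b * b)" using \<open>q dvd a\<close> dvd_diff dvd_mult2 by blast
    hence "q dvd b * b" by simp
    with assms show False by (simp add: prime_dvd_mult_iff)
  qed
  with \<open>prime q\<close> show ?thesis
    by (simp add: prime_imp_coprime coprime_commute)
qed

lemma row_elim_schur_border_col:
  assumes sym: "\<And>i j. A i j = A j i" and det: "coprime (det2 A) m" and "2 \<le> i" "l < 2"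
  shows "m dvd row_elim (schur_X m A) (schur_Y m A) A i l"
proof -
  let ?t = "modular_inverse m (det2 A)"
  have "m dvd 1 - det2 A * ?t"
    using cong_modular_inverse1[OF det] by (simp add: cong_iff_dvd_diff dvd_diff_commute)
  moreover have "A 1 0 = A 0 1" by (rule sym)
  hence "row_elim (schur_X m A) (schur_Y m A) A i l = A i l * (1 - det2 A * ?t)"
    using assms(3,4) by (auto simp: less_2_cases_iff row_elim_def schur_X_def schur_Y_def det2_def algebra_simps)
  ultimately show ?thesis by simp
qed

lemma block_form_schur_elim:
  assumes n: "1 < n" and sym: "\<And>i j. A i j = A j i" and det: "coprime (det2 A) m"
  shows "block_form n m A (congr_mat n (schur_elim m A) A)"
  unfolding block_form_def schur_elim_def
proof (intro conjI allI impI)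
  fix i j :: nat assume "i < 2" "j < 2"
  then show "congr_mat n (elim_mat (schur_X m A) (schur_Y m A)) A i j mod m = A i j mod m"
    using n by (simp add: congr_mat_elim_mat row_elim_def schur_X_def schur_Y_def)
next
  fix i j :: nat assume i: "i < 2" and j: "2 \<le> j \<and> j < n"
  have dvd: "m dvd row_elim (schur_X m A) (schur_Y m A) A j i"
    using row_elim_schur_border_col[OF sym det] i j by blast
  have "A 0 j = A j 0" "A 1 j = A j 1" "A 1 0 = A 0 1" using sym by auto
  hence "congr_mat n (elim_mat (schur_X m A) (schur_Y m A)) A i j
           = row_elim (schur_X m A) (schur_Y m A) A j i"
    using n i j by (auto simp: less_2_cases_iff congr_mat_elim_mat row_elim_def schur_X_def schur_Y_def)
  with dvd show "congr_mat n (elim_mat (schur_X m A) (schur_Y m A)) A i j mod m = 0" by simp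
  have "congr_mat n (elim_mat (schur_X m A) (schur_Y m A)) A j i
          = row_elim (schur_X m A) (schur_Y m A) A j i"
    using n i j by (simp add: congr_mat_elim_mat schur_X_def schur_Y_def)
  with dvd show "congr_mat n (elim_mat (schur_X m A) (schur_Y m A)) A j i mod m = 0" by simp
qed

lemma lower_block_schur_elim:
  assumes n: "1 < n" and sym: "\<And>i j. A i j = A j i" and det: "coprime (det2 A) m"
  shows "lower_block n m (congr_mat n (schur_elim m A) A) = schur_complement n m A"
proof (intro ext)
  fix i j
  let ?R = "row_elim (schur_X m A) (schur_Y m A) A"
  show "lower_block n m (congr_mat n (schur_elim m A) A) i j = schur_complement n m A i j"
  proof (cases "i < n - 2 \<and> j < n - 2")
    case True
    hence "i + 2 < n" "j + 2 < n" by auto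
    hence "congr_mat n (schur_elim m A) A (i+2) (j+2)
        = ?R (i+2) (j+2) - (schur_X m A (j+2) * ?R (i+2) 0 + schur_Y m A (j+2) * ?R (i+2) 1)"
      using congr_mat_elim_mat[OF n, of "i+2" "j+2"] by (simp add: schur_elim_def)
    moreover have "m dvd schur_X m A (j+2) * ?R (i+2) 0 + schur_Y m A (j+2) * ?R (i+2) 1"
      using row_elim_schur_border_col[OF sym det] by simp
    ultimately have "congr_mat n (schur_elim m A) A (i+2) (j+2) mod m = ?R (i+2) (j+2) mod m"
      by (simp add: mod_diff_right_eq[symmetric] dvd_eq_mod_eq_0)
    thus ?thesis
      using True by (simp add: lower_block_def schur_complement_def row_elim_def schur_shift_def diff_diff_eq)
  qed (auto simp: lower_block_def schur_complement_def)
qed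

section \<open>Matrices with a prescribed border\<close>

definition border :: "(nat \<Rightarrow> nat \<Rightarrow> int) \<Rightarrow> nat \<Rightarrow> nat \<Rightarrow> int" where
  "border A = (\<lambda>i j. if i < 2 \<or> j < 2 then A i j else 0)"

lemma schur_shift_border: "schur_shift m (border A) = schur_shift m A"
  by (auto simp: fun_eq_iff schur_shift_def schur_X_def schur_Y_def det2_def border_def)

lemma schur_shift_sym:
  assumes sym: "\<And>i j. A i j = A j i" and "2 \<le> i" "2 \<le> j"
  shows "schur_shift m A i j = schur_shift m A j i"
proof -
  have "A 0 j = A j 0" "A 1 j = A j 1" "A 0 i = A i 0" "A 1 i = A i 1" by (simp_all add: sym)
  thus ?thesis using assms(2,3) by (simp add: schur_shift_def schur_X_def schur_Y_def algebra_simps)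
qed

lemma schur_complement_in_sym_mats:
  assumes "A \<in> sym_mats n m" "m > 0"
  shows "schur_complement n m A \<in> sym_mats (n - 2) m"
  using assms schur_shift_sym[OF sym_mats_sym[OF assms(1)], of "_ + 2" "_ + 2" m]
  by (auto simp: sym_mats_def schur_complement_def)

lemma sym_mats_eqI_border_schur_complement:
  assumes A: "A \<in> sym_mats n m" and B: "B \<in> sym_mats n m"
    and border: "border A = border B" and schur: "schur_complement n m A = schur_complement n m B"
  shows "A = B"
proof (intro ext)
  fix i j
  show "A i j = B i j"
  proof (cases "i < 2 \<or> j < 2")
    case True thus ?thesis using fun_cong[OF fun_cong[OF border, of i], of j] by (simp add: border_def)
  next
    case outside_border: False
    show ?thesis
    proof (cases "i < n \<and> j < n")
      case False thus ?thesis using sym_mats_outside[OF A] sym_mats_outside[OF B] by simp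
    next
      case True
      let ?s = "schur_shift m A i j"
      have shift: "schur_shift m B = schur_shift m A"
        by (metis schur_shift_border border)
      have ij: "i - 2 + 2 = i" "j - 2 + 2 = j" "i - 2 < n - 2" "j - 2 < n - 2"
        using True outside_border by auto
      have "(A i j - ?s) mod m = (B i j - ?s) mod m"
        using fun_cong[OF fun_cong[OF schur, of "i - 2"], of "j - 2"]
        unfolding schur_complement_def shift by (simp only: ij) simp
      hence "A i j mod m = B i j mod m" by (simp add: mod_eq_dvd_iff)
      thus ?thesis using sym_mats_range[OF A] sym_mats_range[OF B] True by simp
    qed
  qed
qed

definition extend_border :: "nat \<Rightarrow> int \<Rightarrow> (nat \<Rightarrow> nat \<Rightarrow> int) \<Rightarrow> (nat \<Rightarrow> nat \<Rightarrow> int) \<Rightarrow> nat \<Rightarrow> nat \<Rightarrow> int" where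
  "extend_border n m A E = (\<lambda>i j. if i < 2 \<or> j < 2 then A i j
     else if i < n \<and> j < n then (E (i-2) (j-2) + schur_shift m A i j) mod m else 0)"

lemma border_extend_border: "border (extend_border n m A E) = border A"
  by (simp add: fun_eq_iff border_def extend_border_def)

lemma extend_border_in_sym_mats:
  assumes A: "A \<in> sym_mats n m" and E: "E \<in> sym_mats (n - 2) m" and "m > 0"
  shows "extend_border n m A E \<in> sym_mats n m"
proof -
  have "extend_border n m A E i j = extend_border n m A E j i" for i j
    using sym_mats_sym[OF A] sym_mats_sym[OF E] schur_shift_sym[OF sym_mats_sym[OF A], of i j m]
    by (auto simp: extend_border_def)
  thus ?thesis
    using assms sym_mats_range[OF A] sym_mats_outside[OF A]
    by (auto simp: sym_mats_def extend_border_def)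
qed

lemma schur_complement_extend_border:
  assumes E: "E \<in> sym_mats (n - 2) m"
  shows "schur_complement n m (extend_border n m A E) = E"
proof (intro ext)
  fix i j
  have shift: "schur_shift m (extend_border n m A E) = schur_shift m A"
    by (metis schur_shift_border border_extend_border)
  show "schur_complement n m (extend_border n m A E) i j = E i j"
    using sym_mats_range[OF E, of i j] sym_mats_outside[OF E, of i j]
    unfolding schur_complement_def shift by (auto simp: extend_border_def mod_diff_left_eq)
qed

lemma bij_betw_border_schur_complement:
  assumes "m > 0" and S: "S \<subseteq> sym_mats n m"
    and border_closed: "\<And>A B. A \<in> S \<Longrightarrow> B \<in> sym_mats n m \<Longrightarrow> border B = border A \<Longrightarrow> B \<in> S"
  shows "bij_betw (\<lambda>A. (border A, schur_complement n m A)) S (border ` S \<times> sym_mats (n - 2) m)"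
  unfolding bij_betw_def
proof
  show "inj_on (\<lambda>A. (border A, schur_complement n m A)) S"
    using S sym_mats_eqI_border_schur_complement by (intro inj_onI) blast
  show "(\<lambda>A. (border A, schur_complement n m A)) ` S = border ` S \<times> sym_mats (n - 2) m"
  proof (intro equalityI subsetI)
    fix x assume "x \<in> (\<lambda>A. (border A, schur_complement n m A)) ` S"
    thus "x \<in> border ` S \<times> sym_mats (n - 2) m"
      using S schur_complement_in_sym_mats[OF _ \<open>m > 0\<close>] by auto
  next
    fix x assume "x \<in> border ` S \<times> sym_mats (n - 2) m"
    then obtain A E where x: "x = (border A, E)" and "A \<in> S" and E: "E \<in> sym_mats (n - 2) m"
      by auto
    hence "extend_border n m A E \<in> S"
      using S border_closed extend_border_in_sym_mats[OF _ E \<open>m > 0\<close>] border_extend_border by blast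
    moreover have "x = (border (extend_border n m A E), schur_complement n m (extend_border n m A E))"
      using x by (simp add: border_extend_border schur_complement_extend_border[OF E])
    ultimately show "x \<in> (\<lambda>A. (border A, schur_complement n m A)) ` S" by blast
  qed
qed

lemma map_pmf_lower_block_schur_elim:
  assumes "1 < n" "m > 0" and S: "S \<subseteq> sym_mats n m" "S \<noteq> {}"
    and border_closed: "\<And>A B. A \<in> S \<Longrightarrow> B \<in> sym_mats n m \<Longrightarrow> border B = border A \<Longrightarrow> B \<in> S"
    and det: "\<And>A. A \<in> S \<Longrightarrow> coprime (det2 A) m"
  shows "map_pmf (\<lambda>A. lower_block n m (congr_mat n (schur_elim m A) A)) (pmf_of_set S)
           = pmf_of_set (sym_mats (n - 2) m)"
proof -
  have "finite S" using S(1) finite_sym_mats by (rule finite_subset)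
  have "map_pmf (\<lambda>A. lower_block n m (congr_mat n (schur_elim m A) A)) (pmf_of_set S)
          = map_pmf (snd \<circ> (\<lambda>A. (border A, schur_complement n m A))) (pmf_of_set S)"
    using \<open>finite S\<close> S assms(1) det sym_mats_sym
    by (intro map_pmf_cong refl) (auto simp: lower_block_schur_elim)
  also have "\<dots> = pmf_of_set (sym_mats (n - 2) m)"
    using bij_betw_border_schur_complement[OF \<open>m > 0\<close> S(1) border_closed] \<open>finite S\<close> S(2)
    by (rule map_pmf_of_set_bij_betw_snd)
  finally show ?thesis .
qed

theorem lemma2p2:
  fixes p \<mu> n :: nat
  assumes "prime p" and "\<mu> \<ge> 1" and "n > 2"
  defines "m \<equiv> int p ^ \<mu>"
  defines "S \<equiv> {A \<in> sym_mats n m. A 0 0 mod int p = 0 \<and> A 0 1 mod int p \<noteq> 0}"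
  shows "\<exists>V :: (nat \<Rightarrow> nat \<Rightarrow> int) \<Rightarrow> (nat \<Rightarrow> nat \<Rightarrow> int).
           (\<forall>A\<in>S. block_form n m A (congr_mat n (V A) A)) \<and>
           map_pmf (\<lambda>A. lower_block n m (congr_mat n (V A) A)) (pmf_of_set S)
             = pmf_of_set (sym_mats (n - 2) m)"
proof -
  have "int p \<ge> 2" using \<open>prime p\<close> prime_ge_2_nat by fastforce
  moreover have "int p \<le> m" unfolding m_def using \<open>\<mu> \<ge> 1\<close> \<open>int p \<ge> 2\<close> by (intro self_le_power) auto
  ultimately have "m > 1" by linarith
  have S_sub: "S \<subseteq> sym_mats n m" by (auto simp: S_def)
  have det: "coprime (det2 A) m" if "A \<in> S" for A
    using that \<open>prime p\<close> unfolding S_def m_def det2_def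
    by (intro coprime_det2) (auto simp: dvd_eq_mod_eq_0)
  have "(\<lambda>i j. if i = 0 \<and> j = 1 \<or> i = 1 \<and> j = 0 then 1 else 0) \<in> S"
    using \<open>m > 1\<close> \<open>int p \<ge> 2\<close> \<open>n > 2\<close> by (auto simp: S_def sym_mats_def)
  hence "S \<noteq> {}" by blast
  have border_closed: "B \<in> S" if "A \<in> S" "B \<in> sym_mats n m" "border B = border A" for A B
  proof -
    have "border B 0 0 = border A 0 0" "border B 0 1 = border A 0 1" using that(3) by simp_all
    thus ?thesis using that by (simp add: S_def border_def)
  qed
  show ?thesis
  proof (intro exI[of _ "schur_elim m"] conjI ballI)
    fix A assume "A \<in> S"
    with S_sub det \<open>n > 2\<close> show "block_form n m A (congr_mat n (schur_elim m A) A)"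
      by (intro block_form_schur_elim) (auto intro: sym_mats_sym)
  next
    show "map_pmf (\<lambda>A. lower_block n m (congr_mat n (schur_elim m A) A)) (pmf_of_set S)
            = pmf_of_set (sym_mats (n - 2) m)"
      using \<open>n > 2\<close> \<open>m > 1\<close> S_sub \<open>S \<noteq> {}\<close> det border_closed
      by (intro map_pmf_lower_block_schur_elim) auto
  qed
qed

end
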